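(* Consider a multi-layer directed network from the ML-ScBM. Under $H_0:(K_s,K_r)=(K_{s0},K_{r0})$ and Assumptions 1–4, with $\hat R$ built from the labels returned by $\mathcal M$ with inputs $(K_{s0},K_{r0})$, we have $\|\hat R-R\|=o_P(1)$, where $\|\cdot\|$ is the spectral norm.
   Context: ML-ScBM: $n$ nodes, $L\ge1$ layers, adjacency matrices $A^{(\ell)}\in\{0,1\}^{n\times n}$ with zero diagonal; sender labels $g^s\in\{1,\dots,K_s\}^n$, receiver labels $g^r\in\{1,\dots,K_r\}^n$; block matrices $B^{(\ell)}\in[0,1]^{K_s\times K_r}$; entries $A^{(\ell)}(i,j)$, $i\ne j$, independent Bernoulli with mean $\Omega^{(\ell)}(i,j)=B^{(\ell)}(g^s(i),g^r(j))$, $\Omega^{(\ell)}(i,i)=0$. Quantities may depend on $n$; $K_{\max}=\max(K_s,K_r)$. Assumption 1: some $\delta\in(0,1/2)$ with $\delta\le B^{(\ell)}(k,l)\le1-\delta$. Assumption 2: for some $c_0>0$, each sender community has $\ge c_0n/K_s$ nodes, each receiver community $\ge c_0n/K_r$ nodes. Assumption 3: $K_{\max}^2L\log n/n\to0$. Assumption 4: $\mathcal M$ with inputs $(K_s,K_r)$ returns $\hat g^s,\hat g^r$ with $\mathbb P(\hat g^s=g^s)\to1$, $\mathbb P(\hat g^r=g^r)\to1$ (up to permutation). $R(i,i)=\hat R(i,i)=0$; for $i\ne j$: $R(i,j)=\frac{\sum_\ell(A^{(\ell)}(i,j)-\Omega^{(\ell)}(i,j))}{\sqrt{(n-1)\sum_\ell\Omega^{(\ell)}(i,j)(1-\Omega^{(\ell)}(i,j))}}$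 and $\hat R(i,j)=\frac{\sum_\ell(A^{(\ell)}(i,j)-\hat\Omega^{(\ell)}(i,j))}{\sqrt{(n-1)\sum_\ell\hat\Omega^{(\ell)}(i,j)(1-\hat\Omega^{(\ell)}(i,j))}}$, where $\hat\Omega^{(\ell)}(i,j)=\hat B^{(\ell)}(\hat g^s(i),\hat g^r(j))$ and $\hat B^{(\ell)}(k,l)$ is the average of $A^{(\ell)}(i,j)$ over $\hat g^s(i)=k,\hat g^r(j)=l$. *)

theory Defs
  imports "HOL-Probability.Probability"
begin

text \<open>Layers are indexed 0..L-1, nodes 0..n-1, communities 1..K.
  An adjacency tensor is a function A :: nat \<times> nat \<times> nat \<Rightarrow> bool,
  A (l, i, j) being the entry A^(l)(i,j).\<close>

type_synonym adj = "nat \<times> nat \<times> nat \<Rightarrow> bool"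

definition Omega :: "(nat \<Rightarrow> nat \<Rightarrow> nat \<Rightarrow> real) \<Rightarrow> (nat \<Rightarrow> nat) \<Rightarrow> (nat \<Rightarrow> nat)
    \<Rightarrow> nat \<Rightarrow> nat \<Rightarrow> nat \<Rightarrow> real" where
  "Omega B gs gr l i j = (if i = j then 0 else B l (gs i) (gr j))"

definition adj_pmf :: "nat \<Rightarrow> nat \<Rightarrow> (nat \<Rightarrow> nat \<Rightarrow> nat \<Rightarrow> real) \<Rightarrow> adj pmf" where
  "adj_pmf n L Om = Pi_pmf {(l, i, j). l < L \<and> i < n \<and> j < n \<and> i \<noteq> j} False
      (\<lambda>(l, i, j). bernoulli_pmf (Om l i j))"

definition Rmat :: "nat \<Rightarrow> nat \<Rightarrow> (nat \<Rightarrow> nat \<Rightarrow> nat \<Rightarrow> real) \<Rightarrow> adj \<Rightarrow> nat \<Rightarrow> nat \<Rightarrow> real" where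
  "Rmat n L Om A i j = (if i = j then 0 else
     (\<Sum>l<L. of_bool (A (l, i, j)) - Om l i j) /
     sqrt ((real n - 1) * (\<Sum>l<L. Om l i j * (1 - Om l i j))))"

definition Bhat :: "nat \<Rightarrow> adj \<Rightarrow> (nat \<Rightarrow> nat) \<Rightarrow> (nat \<Rightarrow> nat) \<Rightarrow> nat \<Rightarrow> nat \<Rightarrow> nat \<Rightarrow> real" where
  "Bhat n A hgs hgr l k k' =
     (\<Sum>i\<in>{i. i < n \<and> hgs i = k}. \<Sum>j\<in>{j. j < n \<and> hgr j = k'}. of_bool (A (l, i, j))) /
     (real (card {i. i < n \<and> hgs i = k}) * real (card {j. j < n \<and> hgr j = k'}))"

definition Rhat :: "nat \<Rightarrow> nat \<Rightarrow> adj \<Rightarrow> (nat \<Rightarrow> nat) \<Rightarrow> (nat \<Rightarrow> nat) \<Rightarrow> nat \<Rightarrow> nat \<Rightarrow> real" where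
  "Rhat n L A hgs hgr = Rmat n L (Omega (Bhat n A hgs hgr) hgs hgr) A"

definition spec_norm :: "nat \<Rightarrow> (nat \<Rightarrow> nat \<Rightarrow> real) \<Rightarrow> real" where
  "spec_norm n M = (SUP x\<in>{x :: nat \<Rightarrow> real. (\<Sum>j<n. (x j)\<^sup>2) \<le> 1}.
      sqrt (\<Sum>i<n. (\<Sum>j<n. M i j * x j)\<^sup>2))"

definition labels_equiv :: "nat \<Rightarrow> nat \<Rightarrow> (nat \<Rightarrow> nat) \<Rightarrow> (nat \<Rightarrow> nat) \<Rightarrow> bool" where
  "labels_equiv n K hg g = (\<exists>\<pi>. bij_betw \<pi> {1..K} {1..K} \<and> (\<forall>i<n. hg i = \<pi> (g i)))"

end

theory Submission
  imports Defs
begin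

text \<open>On the event that the estimator recovers both label vectors up to a renaming of the
  communities, Rhat is built from the block averages Bhat of the true partition. Hoeffding's
  inequality and a union bound over the L Ks Kr blocks, each with at least c0^2 n^2 / (2 K^2)
  off-diagonal entries, show that with probability 1 - O(L K^2 / n^2) every Bhat is within
  t = O(K sqrt(ln n) / n) of B; the diagonal terms included in Bhat only add a bias O(K / n).
  While the means stay in [delta, 1 - delta], standardization is Lipschitz in the mean, so every
  entry of Rhat - R is O(t sqrt(L / n)), and the crude bound ||X|| <= n max |X i j| gives
  ||Rhat - R|| = O(t sqrt(n L)) = O(K sqrt(L ln n / n)), which tends to 0 by Assumption 3.\<close>

section \<open>Perturbation of standardized residuals\<close>

lemma spec_norm_le_entrywise:
  assumes "b \<ge> 0" and entry: "\<And>i j. i < n \<Longrightarrow> j < n \<Longrightarrow> \<bar>M i j\<bar> \<le> b"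
  shows "spec_norm n M \<le> real n * b"
  unfolding spec_norm_def
proof (rule cSUP_least)
  have "(\<lambda>_. 0) \<in> {x :: nat \<Rightarrow> real. (\<Sum>j<n. (x j)\<^sup>2) \<le> 1}" by simp
  then show "{x :: nat \<Rightarrow> real. (\<Sum>j<n. (x j)\<^sup>2) \<le> 1} \<noteq> {}" by (metis empty_iff)
next
  fix x :: "nat \<Rightarrow> real" assume "x \<in> {x. (\<Sum>j<n. (x j)\<^sup>2) \<le> 1}"
  then have x: "(\<Sum>j<n. (x j)\<^sup>2) \<le> 1" by simp
  have row: "(\<Sum>j<n. M i j * x j)\<^sup>2 \<le> real n * b\<^sup>2" if "i < n" for i
  proof -
    have "(\<Sum>j<n. M i j * x j)\<^sup>2 \<le> (\<Sum>j<n. (M i j)\<^sup>2) * (\<Sum>j<n. (x j)\<^sup>2)"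
      by (rule Cauchy_Schwarz_ineq_sum)
    also have "\<dots> \<le> (\<Sum>j<n. (M i j)\<^sup>2)"
      by (rule mult_left_le[OF x]) (simp add: sum_nonneg)
    also have "\<dots> \<le> (\<Sum>j<n. b\<^sup>2)"
      using entry[OF that] \<open>b \<ge> 0\<close> by (intro sum_mono) (simp add: abs_le_square_iff [symmetric])
    finally show ?thesis by simp
  qed
  have "(\<Sum>i<n. (\<Sum>j<n. M i j * x j)\<^sup>2) \<le> (\<Sum>i<n. real n * b\<^sup>2)"
    using row by (intro sum_mono) simp
  also have "\<dots> = (real n * b)\<^sup>2"
    by (simp add: power2_eq_square)
  finally have "(\<Sum>i<n. (\<Sum>j<n. M i j * x j)\<^sup>2) \<le> (real n * b)\<^sup>2" .
  then show "sqrt (\<Sum>i<n. (\<Sum>j<n. M i j * x j)\<^sup>2) \<le> real n * b"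
    using \<open>b \<ge> 0\<close> real_le_lsqrt by simp
qed

lemma abs_div_sqrt_perturbation:
  fixes X D V W r :: real
  assumes "r > 0" and "r\<^sup>2 \<le> V" and "r\<^sup>2 \<le> W"
  shows "\<bar>(X + D) / sqrt W - X / sqrt V\<bar> \<le> \<bar>D\<bar> / r + \<bar>X\<bar> * \<bar>V - W\<bar> / (2 * r ^ 3)"
proof -
  define u v where "u = sqrt V" and "v = sqrt W"
  have "r \<le> u" "r \<le> v"
    unfolding u_def v_def by (simp_all add: real_le_rsqrt assms)
  then have "u > 0" "v > 0" using \<open>r > 0\<close> by auto
  have "0 \<le> V" "0 \<le> W" using assms zero_le_power2[of r] by linarith+
  then have "V = u\<^sup>2" "W = v\<^sup>2" unfolding u_def v_def by simp_all
  have split: "(X + D) / v - X / u = D / v + X * (u - v) / (u * v)"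
    using \<open>u > 0\<close> \<open>v > 0\<close> by (simp add: field_simps)
  have "\<bar>D / v\<bar> \<le> \<bar>D\<bar> / r"
    using \<open>r \<le> v\<close> \<open>r > 0\<close> by (simp add: abs_divide frac_le)
  have "\<bar>u - v\<bar> * (2 * r) \<le> \<bar>u - v\<bar> * (u + v)"
    using \<open>r \<le> u\<close> \<open>r \<le> v\<close> by (intro mult_left_mono) auto
  also have "\<dots> = \<bar>(u - v) * (u + v)\<bar>"
    using \<open>u > 0\<close> \<open>v > 0\<close> by (simp add: abs_mult)
  also have "\<dots> = \<bar>V - W\<bar>"
    by (simp add: \<open>V = u\<^sup>2\<close> \<open>W = v\<^sup>2\<close> power2_eq_square algebra_simps)
  finally have uv: "\<bar>u - v\<bar> \<le> \<bar>V - W\<bar> / (2 * r)"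
    using \<open>r > 0\<close> by (simp add: field_simps)
  have "\<bar>X * (u - v) / (u * v)\<bar> = \<bar>X\<bar> * \<bar>u - v\<bar> / (u * v)"
    using \<open>u > 0\<close> \<open>v > 0\<close> by (simp add: abs_divide abs_mult)
  also have "\<dots> \<le> \<bar>X\<bar> * (\<bar>V - W\<bar> / (2 * r)) / (r * r)"
    using uv \<open>r \<le> u\<close> \<open>r \<le> v\<close> \<open>r > 0\<close>
    by (intro frac_le mult_left_mono mult_mono) auto
  also have "\<dots> = \<bar>X\<bar> * \<bar>V - W\<bar> / (2 * r ^ 3)"
    by (simp add: power3_eq_cube mult_ac)
  finally have "\<bar>X * (u - v) / (u * v)\<bar> \<le> \<bar>X\<bar> * \<bar>V - W\<bar> / (2 * r ^ 3)" .
  have "\<bar>(X + D) / v - X / u\<bar> \<le> \<bar>D\<bar> / r + \<bar>X\<bar> * \<bar>V - W\<bar> / (2 * r ^ 3)"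
    unfolding split by (rule order_trans[OF abs_triangle_ineq add_mono]) fact+
  then show ?thesis unfolding u_def v_def .
qed

lemma abs_div_sqrt_perturbation_le:
  fixes X D V W \<delta> t :: real and L :: nat
  assumes "1 \<le> L" "0 < \<delta>" "0 \<le> t" "t \<le> \<delta> / 4"
    and X: "\<bar>X\<bar> \<le> L" and D: "\<bar>D\<bar> \<le> L * t" and VW: "\<bar>V - W\<bar> \<le> L * t" and V: "L * \<delta> / 2 \<le> V"
  shows "\<bar>(X + D) / sqrt W - X / sqrt V\<bar> \<le> 2 * (1 + 2 / \<delta>) / sqrt \<delta> * t * sqrt L"
proof -
  define r where "r = sqrt L * sqrt \<delta> / 2"
  have "r > 0" "r\<^sup>2 = L * \<delta> / 4"
    using assms by (simp_all add: r_def power_mult_distrib power_divide)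
  have "r\<^sup>2 \<le> V" "r\<^sup>2 \<le> W"
    using \<open>r\<^sup>2 = L * \<delta> / 4\<close> V VW mult_left_mono[OF \<open>t \<le> \<delta> / 4\<close>, of "real L"] \<open>0 < \<delta>\<close>
    by (auto simp: abs_le_iff)
  have "\<bar>(X + D) / sqrt W - X / sqrt V\<bar> \<le> \<bar>D\<bar> / r + \<bar>X\<bar> * \<bar>V - W\<bar> / (2 * r ^ 3)"
    by (rule abs_div_sqrt_perturbation) fact+
  also have "\<dots> \<le> L * t / r + L * (L * t) / (2 * r ^ 3)"
    using X D VW \<open>r > 0\<close> by (intro add_mono divide_right_mono mult_mono) auto
  also have "\<dots> = 2 * (1 + 2 / \<delta>) / sqrt \<delta> * t * sqrt L"
  proof -
    have "x\<^sup>2 * t / (x * y / 2) + x\<^sup>2 * (x\<^sup>2 * t) / (2 * (x * y / 2) ^ 3)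
        = 2 * (1 + 2 / y\<^sup>2) / y * t * x" if "x > 0" "y > 0" for x y :: real
      using that by (simp add: field_simps power2_eq_square power3_eq_cube)
    from this[of "sqrt L" "sqrt \<delta>"] show ?thesis
      using assms unfolding r_def by simp
  qed
  finally show ?thesis .
qed

lemma abs_sum_diff_le:
  fixes f g :: "nat \<Rightarrow> real"
  assumes "\<And>l. l < L \<Longrightarrow> \<bar>f l - g l\<bar> \<le> t"
  shows "\<bar>(\<Sum>l<L. f l) - (\<Sum>l<L. g l)\<bar> \<le> L * t"
proof -
  have "\<bar>(\<Sum>l<L. f l) - (\<Sum>l<L. g l)\<bar> \<le> (\<Sum>l<L. \<bar>f l - g l\<bar>)"
    by (simp add: sum_subtractf [symmetric] sum_abs)
  also have "\<dots> \<le> (\<Sum>l<L. t)"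
    using assms by (intro sum_mono) simp
  finally show ?thesis by simp
qed

lemma abs_bernoulli_variance_diff_le:
  fixes p q :: real
  assumes "0 \<le> p" "p \<le> 1" "0 \<le> q" "q \<le> 1"
  shows "\<bar>p * (1 - p) - q * (1 - q)\<bar> \<le> \<bar>p - q\<bar>"
proof -
  have "p * (1 - p) - q * (1 - q) = (p - q) * (1 - p - q)" by (simp add: algebra_simps)
  moreover have "\<bar>1 - p - q\<bar> \<le> 1" using assms by simp
  ultimately show ?thesis
    by (simp add: abs_mult mult_left_le)
qed

lemma bernoulli_variance_ge:
  fixes p \<delta> :: real
  assumes "0 < \<delta>" "\<delta> \<le> 1/2" "\<delta> \<le> p" "p \<le> 1 - \<delta>"
  shows "\<delta> / 2 \<le> p * (1 - p)"
proof -
  have "0 \<le> (p - \<delta>) * (1 - \<delta> - p)" using assms by simp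
  moreover have "\<delta> * \<delta> \<le> \<delta> * (1 / 2)" using assms by (intro mult_left_mono) auto
  ultimately show ?thesis by (simp add: algebra_simps)
qed

lemma abs_standardized_sum_perturbation:
  fixes a :: "nat \<Rightarrow> bool" and p q :: "nat \<Rightarrow> real" and L :: nat and m \<delta> t :: real
  assumes "L \<ge> 1" "m > 0" "0 < \<delta>" "\<delta> \<le> 1/2" "0 \<le> t" "t \<le> \<delta> / 4"
    and p: "\<And>l. l < L \<Longrightarrow> \<delta> \<le> p l \<and> p l \<le> 1 - \<delta>"
    and q: "\<And>l. l < L \<Longrightarrow> \<bar>q l - p l\<bar> \<le> t"
  shows "\<bar>(\<Sum>l<L. of_bool (a l) - q l) / sqrt (m * (\<Sum>l<L. q l * (1 - q l)))
          - (\<Sum>l<L. of_bool (a l) - p l) / sqrt (m * (\<Sum>l<L. p l * (1 - p l)))\<bar>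
        \<le> 2 * (1 + 2 / \<delta>) / sqrt \<delta> * t * sqrt L / sqrt m"
proof -
  define X D V W where "X = (\<Sum>l<L. of_bool (a l) - p l)" and "D = (\<Sum>l<L. p l) - (\<Sum>l<L. q l)"
    and "V = (\<Sum>l<L. p l * (1 - p l))" and "W = (\<Sum>l<L. q l * (1 - q l))"
  have "\<bar>X\<bar> \<le> real L * 1"
    unfolding X_def sum_subtractf using p assms by (intro abs_sum_diff_le) (fastforce simp: abs_le_iff)
  moreover have "\<bar>D\<bar> \<le> L * t"
    unfolding D_def using q by (intro abs_sum_diff_le) (simp add: abs_minus_commute)
  moreover have "\<bar>V - W\<bar> \<le> L * t"
    unfolding V_def W_def
  proof (intro abs_sum_diff_le)
    fix l assume "l < L"
    with p q have "\<delta> \<le> p l" "p l \<le> 1 - \<delta>" "\<bar>q l - p l\<bar> \<le> t" by auto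
    with assms have "\<bar>p l * (1 - p l) - q l * (1 - q l)\<bar> \<le> \<bar>p l - q l\<bar>"
      by (intro abs_bernoulli_variance_diff_le) (auto simp: abs_le_iff)
    with \<open>\<bar>q l - p l\<bar> \<le> t\<close> show "\<bar>p l * (1 - p l) - q l * (1 - q l)\<bar> \<le> t"
      by (simp add: abs_minus_commute)
  qed
  moreover have "L * \<delta> / 2 \<le> V"
    using sum_mono[of "{..<L}" "\<lambda>_. \<delta> / 2" "\<lambda>l. p l * (1 - p l)"] bernoulli_variance_ge p assms
    by (simp add: V_def)
  ultimately have bound: "\<bar>(X + D) / sqrt W - X / sqrt V\<bar> \<le> 2 * (1 + 2 / \<delta>) / sqrt \<delta> * t * sqrt L"
    using assms by (intro abs_div_sqrt_perturbation_le) auto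
  have "(\<Sum>l<L. of_bool (a l) - q l) = X + D"
    unfolding X_def D_def by (simp add: sum_subtractf)
  then have "(\<Sum>l<L. of_bool (a l) - q l) / sqrt (m * W) - X / sqrt (m * V)
      = ((X + D) / sqrt W - X / sqrt V) / sqrt m"
    using \<open>m > 0\<close> by (simp add: real_sqrt_mult field_simps)
  then show ?thesis
    using divide_right_mono[OF bound, of "sqrt m"] \<open>m > 0\<close>
    unfolding X_def [symmetric] V_def [symmetric] W_def [symmetric]
    by (simp add: abs_divide)
qed

section \<open>Block averages\<close>

abbreviation community :: "nat \<Rightarrow> (nat \<Rightarrow> nat) \<Rightarrow> nat \<Rightarrow> nat set" where
  "community n g k \<equiv> {i. i < n \<and> g i = k}"

definition offdiag_block :: "nat \<Rightarrow> (nat \<Rightarrow> nat) \<Rightarrow> (nat \<Rightarrow> nat) \<Rightarrow> nat \<Rightarrow> nat \<Rightarrow> (nat \<times> nat) set" where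
  "offdiag_block n gs gr k k' = {(i, j). i < n \<and> j < n \<and> i \<noteq> j \<and> gs i = k \<and> gr j = k'}"

lemma offdiag_block_eq:
  "offdiag_block n gs gr k k' = community n gs k \<times> community n gr k' - {p. fst p = snd p}"
  by (auto simp: offdiag_block_def)

lemma card_diagonal_le:
  assumes "finite S"
  shows "card (S \<times> R \<inter> {p. fst p = snd p}) \<le> card S"
proof -
  have "S \<times> R \<inter> {p. fst p = snd p} \<subseteq> (\<lambda>i. (i, i)) ` S" by auto
  then show ?thesis
    using assms by (meson card_image_le card_mono finite_imageI order_trans)
qed

lemma card_offdiag_block_ge:
  "real (card (community n gs k)) * (real (card (community n gr k')) - 1)
    \<le> real (card (offdiag_block n gs gr k k'))"
proof -
  let ?S = "community n gs k" and ?R = "community n gr k'"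
  have "card (?S \<times> ?R) = card (?S \<times> ?R \<inter> {p. fst p = snd p}) + card (offdiag_block n gs gr k k')"
    unfolding offdiag_block_eq by (rule card_Int_Diff) simp
  then have "real (card ?S) * real (card ?R)
      = real (card (?S \<times> ?R \<inter> {p. fst p = snd p})) + real (card (offdiag_block n gs gr k k'))"
    by (simp add: card_cartesian_product flip: of_nat_add of_nat_mult)
  with card_diagonal_le[of ?S ?R] show ?thesis
    by (simp add: algebra_simps)
qed

lemma Bhat_minus_eq:
  fixes A :: adj and b :: real
  assumes "community n gs k \<noteq> {}" "community n gr k' \<noteq> {}"
  shows "Bhat n A gs gr l k k' - b
    = (\<Sum>(i, j)\<in>community n gs k \<times> community n gr k'. of_bool (A (l, i, j)) - b)
      / (real (card (community n gs k)) * real (card (community n gr k')))"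
proof -
  let ?S = "community n gs k" and ?R = "community n gr k'"
  have "real (card ?S) * real (card ?R) \<noteq> 0"
    using assms by (simp add: card_gt_0_iff)
  moreover have "(\<Sum>(i, j)\<in>?S \<times> ?R. of_bool (A (l, i, j)) - b)
      = (\<Sum>i\<in>?S. \<Sum>j\<in>?R. of_bool (A (l, i, j))) - b * (real (card ?S) * real (card ?R))"
    unfolding sum.cartesian_product [symmetric] by (simp only: sum_subtractf sum_constant mult_ac)
  ultimately show ?thesis
    unfolding Bhat_def by (simp only: divide_diff_eq_iff not_False_eq_True)
qed

text \<open>Bhat averages over the whole product of the sender and the receiver community, including
  the diagonal pairs (i, i); there are at most as many of them as senders, so they bias Bhat by
  at most one over the size of the receiver community.\<close>

lemma abs_Bhat_minus_le:
  fixes A :: adj and b s :: real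
  assumes "community n gs k \<noteq> {}" "community n gr k' \<noteq> {}" "0 \<le> b" "b \<le> 1" "0 \<le> s"
    and dev: "\<bar>\<Sum>(i, j)\<in>offdiag_block n gs gr k k'. of_bool (A (l, i, j)) - b\<bar>
        \<le> real (card (offdiag_block n gs gr k k')) * s"
  shows "\<bar>Bhat n A gs gr l k k' - b\<bar> \<le> s + 1 / real (card (community n gr k'))"
proof -
  let ?S = "community n gs k" and ?R = "community n gr k'"
  define f where "f = (\<lambda>(i, j). of_bool (A (l, i, j)) - b)"
  define Dg where "Dg = ?S \<times> ?R \<inter> {p. fst p = snd p}"
  define c d where "c = real (card ?S)" and "d = real (card ?R)"
  have "c > 0" "d > 0"
    using assms(1,2) by (simp_all add: c_def d_def card_gt_0_iff)
  have "(\<Sum>p\<in>?S \<times> ?R. f p) = sum f Dg + sum f (offdiag_block n gs gr k k')"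
    unfolding Dg_def offdiag_block_eq by (rule sum.Int_Diff) simp
  then have Bhat_eq: "Bhat n A gs gr l k k' - b = (sum f Dg + sum f (offdiag_block n gs gr k k')) / (c * d)"
    using Bhat_minus_eq[OF assms(1,2)] by (simp add: f_def c_def d_def)
  have "\<bar>sum f Dg\<bar> \<le> c"
  proof -
    have "\<bar>sum f Dg\<bar> \<le> (\<Sum>p\<in>Dg. 1)"
      using assms(3,4) by (intro order_trans[OF sum_abs sum_mono]) (auto simp: f_def)
    also have "\<dots> \<le> c" unfolding Dg_def c_def using card_diagonal_le[of ?S ?R] by simp
    finally show ?thesis .
  qed
  moreover have "\<bar>sum f (offdiag_block n gs gr k k')\<bar> \<le> c * d * s"
  proof -
    have "card (offdiag_block n gs gr k k') \<le> card (?S \<times> ?R)"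
      unfolding offdiag_block_eq by (rule card_mono) auto
    then have "real (card (offdiag_block n gs gr k k')) * s \<le> c * d * s"
      using \<open>0 \<le> s\<close> unfolding c_def d_def
      by (intro mult_right_mono) (simp_all add: card_cartesian_product flip: of_nat_mult)
    with dev show ?thesis by (simp add: f_def)
  qed
  ultimately have "\<bar>sum f Dg + sum f (offdiag_block n gs gr k k')\<bar> \<le> c + c * d * s"
    by (intro order_trans[OF abs_triangle_ineq add_mono])
  then have "\<bar>Bhat n A gs gr l k k' - b\<bar> \<le> (c + c * d * s) / (c * d)"
    unfolding Bhat_eq using \<open>c > 0\<close> \<open>d > 0\<close> by (simp add: abs_divide divide_right_mono)
  also have "\<dots> = s + 1 / d"
    using \<open>c > 0\<close> \<open>d > 0\<close> by (simp add: field_simps)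
  finally show ?thesis unfolding d_def .
qed

lemma community_labels_equiv:
  assumes "labels_equiv n K hg g" and "\<And>i. i < n \<Longrightarrow> g i \<in> {1..K}" and "i0 < n"
  shows "community n hg (hg i0) = community n g (g i0)"
proof -
  obtain \<pi> where "inj_on \<pi> {1..K}" and hg: "\<forall>i<n. hg i = \<pi> (g i)"
    using assms(1) unfolding labels_equiv_def by (auto dest: bij_betw_imp_inj_on)
  have "hg i = hg i0 \<longleftrightarrow> g i = g i0" if "i < n" for i
    using inj_on_eq_iff[OF \<open>inj_on \<pi> {1..K}\<close> assms(2)[OF that] assms(2)[OF \<open>i0 < n\<close>]]
      hg that \<open>i0 < n\<close> by simp
  then show ?thesis by blast
qed

lemma Rhat_labels_equiv:
  assumes "labels_equiv n Ks hgs gs" "labels_equiv n Kr hgr gr"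
    and "\<And>i. i < n \<Longrightarrow> gs i \<in> {1..Ks}" "\<And>i. i < n \<Longrightarrow> gr i \<in> {1..Kr}"
    and "i < n" "j < n"
  shows "Rhat n L A hgs hgr i j = Rhat n L A gs gr i j"
proof -
  have "Bhat n A hgs hgr l (hgs i) (hgr j) = Bhat n A gs gr l (gs i) (gr j)" for l
    using community_labels_equiv[OF assms(1,3,5)] community_labels_equiv[OF assms(2,4,6)]
    by (simp only: Bhat_def)
  then show ?thesis by (simp add: Rhat_def Rmat_def Omega_def)
qed

section \<open>Concentration of block sums\<close>

lemma prob_Pi_pmf_bernoulli_sum_deviation:
  fixes I S :: "'a set" and p :: "'a \<Rightarrow> real" and e :: real
  assumes "finite I" and "S \<subseteq> I" and "S \<noteq> {}" and "e \<ge> 0"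
    and p: "\<And>x. x \<in> S \<Longrightarrow> 0 \<le> p x \<and> p x \<le> 1"
  shows "measure_pmf.prob (Pi_pmf I False (\<lambda>x. bernoulli_pmf (p x)))
      {A. e \<le> \<bar>(\<Sum>x\<in>S. of_bool (A x)) - (\<Sum>x\<in>S. p x)\<bar>}
    \<le> 2 * exp (-2 * e\<^sup>2 / real (card S))"
proof -
  define Q where "Q = Pi_pmf I False (\<lambda>x. bernoulli_pmf (p x))"
  have "finite S" using assms finite_subset by blast
  have "prob_space.indep_vars Q (\<lambda>_. count_space UNIV) (\<lambda>x f. f x) S"
    unfolding Q_def
    by (rule prob_space.indep_vars_subset[OF _ indep_vars_Pi_pmf \<open>S \<subseteq> I\<close>])
      (use \<open>finite I\<close> measure_pmf.prob_space_axioms in auto)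
  from prob_space.indep_vars_compose2[OF measure_pmf.prob_space_axioms this,
      where Y = "\<lambda>_ b. of_bool b" and N = "\<lambda>_. borel"]
  have indep: "prob_space.indep_vars Q (\<lambda>_. borel) (\<lambda>x A. of_bool (A x) :: real) S"
    by simp
  have expectation: "measure_pmf.expectation Q (\<lambda>A. of_bool (A x) :: real) = p x" if "x \<in> S" for x
  proof -
    have "measure_pmf.expectation Q (\<lambda>A. of_bool (A x) :: real)
        = measure_pmf.expectation (map_pmf (\<lambda>f. f x) Q) of_bool"
      by simp
    also have "map_pmf (\<lambda>f. f x) Q = bernoulli_pmf (p x)"
      unfolding Q_def using Pi_pmf_component[OF \<open>finite I\<close>, of x False] that \<open>S \<subseteq> I\<close> by auto
    finally show ?thesis using p[OF that] by simp
  qed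
  interpret Hoeffding_ineq Q S "\<lambda>x A. of_bool (A x) :: real" "\<lambda>_. 0" "\<lambda>_. 1" "\<Sum>x\<in>S. p x"
    by unfold_locales (auto simp: \<open>finite S\<close> indep expectation)
  have "(\<Sum>x\<in>S. ((1::real) - 0)\<^sup>2) > 0" using \<open>finite S\<close> \<open>S \<noteq> {}\<close> by (simp add: card_gt_0_iff)
  from Hoeffding_ineq_abs_ge[OF \<open>e \<ge> 0\<close> this] show ?thesis
    unfolding Q_def by simp
qed

lemma prob_adj_pmf_sum_deviation:
  fixes Om :: "nat \<Rightarrow> nat \<Rightarrow> nat \<Rightarrow> real" and T :: "(nat \<times> nat \<times> nat) set"
  assumes "T \<subseteq> {(l, i, j). l < L \<and> i < n \<and> j < n \<and> i \<noteq> j}" "T \<noteq> {}" "0 \<le> e"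
    and "\<And>l i j. (l, i, j) \<in> T \<Longrightarrow> 0 \<le> Om l i j \<and> Om l i j \<le> 1"
  shows "measure_pmf.prob (adj_pmf n L Om)
      {A. e \<le> \<bar>(\<Sum>x\<in>T. of_bool (A x)) - (\<Sum>(l, i, j)\<in>T. Om l i j)\<bar>}
    \<le> 2 * exp (-2 * e\<^sup>2 / real (card T))"
proof -
  define I where "I = {(l, i, j). l < L \<and> i < n \<and> j < n \<and> i \<noteq> j}"
  have "finite I"
    unfolding I_def by (rule finite_subset[of _ "{..<L} \<times> {..<n} \<times> {..<n}"]) auto
  have "adj_pmf n L Om = Pi_pmf I False (\<lambda>x. bernoulli_pmf (case x of (l, i, j) \<Rightarrow> Om l i j))"
    unfolding adj_pmf_def I_def by (simp add: case_prod_unfold)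
  then show ?thesis
    using assms \<open>finite I\<close> unfolding I_def
    by (intro order_trans[OF eq_refl prob_Pi_pmf_bernoulli_sum_deviation]) auto
qed

lemma prob_offdiag_block_deviation_le:
  fixes B :: "nat \<Rightarrow> nat \<Rightarrow> nat \<Rightarrow> real"
  assumes "l < L" "0 \<le> s" "0 \<le> B l k k'" "B l k k' \<le> 1"
  shows "measure_pmf.prob (adj_pmf n L (Omega B gs gr))
      {A. real (card (offdiag_block n gs gr k k')) * s
          < \<bar>\<Sum>(i, j)\<in>offdiag_block n gs gr k k'. of_bool (A (l, i, j)) - B l k k'\<bar>}
    \<le> 2 * exp (-2 * real (card (offdiag_block n gs gr k k')) * s\<^sup>2)"
proof (cases "offdiag_block n gs gr k k' = {}")
  case True
  then show ?thesis by simp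
next
  case False
  define Bk where "Bk = offdiag_block n gs gr k k'"
  define T where "T = Pair l ` Bk"
  have inj: "inj_on (Pair l) Bk" by (simp add: inj_on_def)
  have "card T = card Bk" unfolding T_def by (rule card_image[OF inj])
  have "T \<subseteq> {(l, i, j). l < L \<and> i < n \<and> j < n \<and> i \<noteq> j}" "T \<noteq> {}"
    using \<open>l < L\<close> False unfolding T_def Bk_def offdiag_block_def by auto
  moreover have "0 \<le> Omega B gs gr l' i j \<and> Omega B gs gr l' i j \<le> 1" if "(l', i, j) \<in> T" for l' i j
    using that assms(3,4) unfolding T_def Bk_def offdiag_block_def Omega_def by auto
  ultimately have "measure_pmf.prob (adj_pmf n L (Omega B gs gr))
      {A. real (card Bk) * s \<le> \<bar>(\<Sum>x\<in>T. of_bool (A x)) - (\<Sum>(l, i, j)\<in>T. Omega B gs gr l i j)\<bar>}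
    \<le> 2 * exp (-2 * (real (card Bk) * s)\<^sup>2 / real (card T))"
    using \<open>0 \<le> s\<close> by (intro prob_adj_pmf_sum_deviation) auto
  moreover have "(\<Sum>x\<in>T. of_bool (A x)) - (\<Sum>(l, i, j)\<in>T. Omega B gs gr l i j)
      = (\<Sum>(i, j)\<in>Bk. of_bool (A (l, i, j)) - B l k k')" for A :: adj
  proof -
    have "(\<Sum>(l', i, j)\<in>T. Omega B gs gr l' i j) = (\<Sum>(i, j)\<in>Bk. B l k k')"
      unfolding T_def sum.reindex[OF inj] comp_def
      by (rule sum.cong) (auto simp: Bk_def offdiag_block_def Omega_def)
    moreover have "(\<Sum>x\<in>T. of_bool (A x)) = (\<Sum>(i, j)\<in>Bk. of_bool (A (l, i, j)))"
      unfolding T_def sum.reindex[OF inj] comp_def by (simp add: case_prod_unfold)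
    ultimately show ?thesis by (simp add: sum_subtractf case_prod_unfold)
  qed
  moreover have "2 * (real (card Bk) * s)\<^sup>2 / real (card T) = 2 * real (card Bk) * s\<^sup>2"
    using \<open>card T = card Bk\<close> False by (simp add: Bk_def power2_eq_square)
  ultimately have "measure_pmf.prob (adj_pmf n L (Omega B gs gr))
      {A. real (card Bk) * s \<le> \<bar>\<Sum>(i, j)\<in>Bk. of_bool (A (l, i, j)) - B l k k'\<bar>}
    \<le> 2 * exp (-2 * real (card Bk) * s\<^sup>2)"
    by simp
  moreover have "measure_pmf.prob (adj_pmf n L (Omega B gs gr))
      {A. real (card Bk) * s < \<bar>\<Sum>(i, j)\<in>Bk. of_bool (A (l, i, j)) - B l k k'\<bar>}
    \<le> measure_pmf.prob (adj_pmf n L (Omega B gs gr))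
      {A. real (card Bk) * s \<le> \<bar>\<Sum>(i, j)\<in>Bk. of_bool (A (l, i, j)) - B l k k'\<bar>}"
    by (rule measure_pmf.finite_measure_mono) auto
  ultimately show ?thesis unfolding Bk_def by linarith
qed

section \<open>The model with a fixed number of nodes\<close>

lemma one_le_ln_of_nat: "3 \<le> n \<Longrightarrow> 1 \<le> ln (real n)"
  using exp_le by (subst ln_ge_iff) auto

lemma real_div_sqrt_pred_le:
  assumes "2 \<le> n"
  shows "real n / sqrt (real n - 1) \<le> sqrt (2 * real n)"
proof -
  have "real n - 1 > 0" using assms by simp
  have "(real n)\<^sup>2 \<le> 2 * real n * (real n - 1)"
    using assms by (simp add: power2_eq_square algebra_simps)
  then have "(real n / sqrt (real n - 1))\<^sup>2 \<le> 2 * real n"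
    using \<open>real n - 1 > 0\<close> by (simp add: power_divide field_simps)
  then show ?thesis by (simp add: real_le_rsqrt)
qed

lemma deviation_bounds_of_small:
  fixes s x \<delta> \<epsilon> :: real
  assumes "0 < \<delta>" "0 \<le> s" "1 \<le> x"
    and small: "s * x \<le> min (\<delta> / 8) (\<epsilon> * sqrt \<delta> / (4 * (1 + 2 / \<delta>)))"
  shows "s \<le> \<delta> / 8" and "2 * (1 + 2 / \<delta>) / sqrt \<delta> * (2 * s) * x \<le> \<epsilon>"
proof -
  from mult_left_mono[OF \<open>1 \<le> x\<close> \<open>0 \<le> s\<close>] small show "s \<le> \<delta> / 8" by simp
  have "0 < 4 * (1 + 2 / \<delta>)" "0 < sqrt \<delta>"
    using \<open>0 < \<delta>\<close> by (auto intro!: add_pos_pos)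
  have "2 * (1 + 2 / \<delta>) / sqrt \<delta> * (2 * s) * x = 4 * (1 + 2 / \<delta>) / sqrt \<delta> * (s * x)"
    by simp
  also have "\<dots> \<le> 4 * (1 + 2 / \<delta>) / sqrt \<delta> * (\<epsilon> * sqrt \<delta> / (4 * (1 + 2 / \<delta>)))"
    using small \<open>0 < 4 * (1 + 2 / \<delta>)\<close> \<open>0 < sqrt \<delta>\<close> by (intro mult_left_mono) auto
  also have "\<dots> = \<epsilon>"
    using \<open>0 < 4 * (1 + 2 / \<delta>)\<close> \<open>0 < sqrt \<delta>\<close> by simp
  finally show "2 * (1 + 2 / \<delta>) / sqrt \<delta> * (2 * s) * x \<le> \<epsilon>" .
qed

text \<open>Hoeffding's inequality bounds the probability that a block with at least
  c0^2 n^2 / (2 K^2) entries deviates at this level by 2 / n^2.\<close>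

definition deviation_level :: "nat \<Rightarrow> nat \<Rightarrow> real \<Rightarrow> real" where
  "deviation_level n K c = real K * sqrt (2 * ln (real n)) / (c * real n)"

locale ml_scbm =
  fixes n L Ks Kr :: nat and gs gr :: "nat \<Rightarrow> nat" and B :: "nat \<Rightarrow> nat \<Rightarrow> nat \<Rightarrow> real"
    and \<delta> c0 :: real
  assumes L_pos: "1 \<le> L" and Ks_pos: "1 \<le> Ks" and Kr_pos: "1 \<le> Kr"
    and gs_range: "\<And>i. i < n \<Longrightarrow> gs i \<in> {1..Ks}"
    and gr_range: "\<And>i. i < n \<Longrightarrow> gr i \<in> {1..Kr}"
    and \<delta>_pos: "0 < \<delta>" and \<delta>_le_half: "\<delta> \<le> 1/2"
    and B_range: "\<And>l k k'. l < L \<Longrightarrow> k \<in> {1..Ks} \<Longrightarrow> k' \<in> {1..Kr} \<Longrightarrow>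
      \<delta> \<le> B l k k' \<and> B l k k' \<le> 1 - \<delta>"
    and c0_pos: "0 < c0"
    and sender_community_size: "\<And>k. k \<in> {1..Ks} \<Longrightarrow> c0 * real n / real Ks \<le> real (card (community n gs k))"
    and receiver_community_size: "\<And>k. k \<in> {1..Kr} \<Longrightarrow> c0 * real n / real Kr \<le> real (card (community n gr k))"
begin

abbreviation Pr :: "adj set \<Rightarrow> real" where
  "Pr \<equiv> measure_pmf.prob (adj_pmf n L (Omega B gs gr))"

abbreviation block_deviation :: "adj \<Rightarrow> nat \<Rightarrow> nat \<Rightarrow> nat \<Rightarrow> real" where
  "block_deviation A l k k' \<equiv> \<bar>\<Sum>(i, j)\<in>offdiag_block n gs gr k k'. of_bool (A (l, i, j)) - B l k k'\<bar>"

lemma card_offdiag_block_lower: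
  assumes "k \<in> {1..Ks}" "k' \<in> {1..Kr}" and small: "real (max Ks Kr) \<le> c0 * real n / 2"
  shows "c0\<^sup>2 * (real n)\<^sup>2 / (2 * (real (max Ks Kr))\<^sup>2) \<le> real (card (offdiag_block n gs gr k k'))"
proof -
  define m where "m = c0 * real n / real (max Ks Kr)"
  have "real (max Ks Kr) \<ge> 1" using Ks_pos by simp
  then have "m \<ge> 2" using small unfolding m_def by (simp add: field_simps)
  have "m \<le> c0 * real n / real Ks" "m \<le> c0 * real n / real Kr"
    unfolding m_def using Ks_pos Kr_pos c0_pos \<open>m \<ge> 2\<close>
    by (auto intro!: divide_left_mono simp: m_def zero_le_mult_iff)
  then have S: "m \<le> real (card (community n gs k))" and R: "m \<le> real (card (community n gr k'))"
    using sender_community_size[OF assms(1)] receiver_community_size[OF assms(2)] by linarith+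
  have "c0\<^sup>2 * (real n)\<^sup>2 / (2 * (real (max Ks Kr))\<^sup>2) = m * (m / 2)"
    by (simp add: m_def power2_eq_square mult_ac)
  also have "\<dots> \<le> real (card (community n gs k)) * (real (card (community n gr k')) - 1)"
    using S R \<open>m \<ge> 2\<close> by (intro mult_mono) auto
  also have "\<dots> \<le> real (card (offdiag_block n gs gr k k'))"
    by (rule card_offdiag_block_ge)
  finally show ?thesis .
qed

lemma prob_block_deviation_le:
  assumes "l < L" "k \<in> {1..Ks}" "k' \<in> {1..Kr}" "0 < n"
    and small: "real (max Ks Kr) \<le> c0 * real n / 2" and s: "deviation_level n (max Ks Kr) c0 \<le> s"
  shows "Pr {A. real (card (offdiag_block n gs gr k k')) * s < block_deviation A l k k'} \<le> 2 / (real n)\<^sup>2"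
proof -
  define N where "N = real (card (offdiag_block n gs gr k k'))"
  define K where "K = real (max Ks Kr)"
  have "0 \<le> ln (real n)" using \<open>0 < n\<close> by simp
  then have "0 \<le> deviation_level n (max Ks Kr) c0"
    using c0_pos by (simp add: deviation_level_def)
  then have "0 \<le> s" and s_sq: "(deviation_level n (max Ks Kr) c0)\<^sup>2 \<le> s\<^sup>2"
    using s by (auto intro: power_mono)
  have "ln (real n) = c0\<^sup>2 * (real n)\<^sup>2 / (2 * K\<^sup>2) * (deviation_level n (max Ks Kr) c0)\<^sup>2"
    using \<open>0 \<le> ln (real n)\<close> \<open>0 < n\<close> Ks_pos c0_pos
    by (simp add: deviation_level_def K_def power_mult_distrib power_divide field_simps)
  also have "\<dots> \<le> N * s\<^sup>2"
    using card_offdiag_block_lower[OF assms(2,3) small] s_sq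
    by (intro mult_mono) (simp_all add: N_def K_def)
  finally have "ln (real n) \<le> N * s\<^sup>2" .
  have "Pr {A. N * s < block_deviation A l k k'} \<le> 2 * exp (-2 * N * s\<^sup>2)"
    unfolding N_def using B_range[OF assms(1-3)] \<delta>_pos
    by (intro prob_offdiag_block_deviation_le \<open>l < L\<close> \<open>0 \<le> s\<close>) auto
  also have "\<dots> \<le> 2 * exp (-2 * ln (real n))"
    using \<open>ln (real n) \<le> N * s\<^sup>2\<close> by simp
  also have "\<dots> = 2 / (real n)\<^sup>2"
  proof -
    have "exp (2 * ln (real n)) = exp (ln (real n)) ^ 2"
      using exp_of_nat_mult[of 2 "ln (real n)"] by simp
    then show ?thesis using \<open>0 < n\<close> by (simp add: exp_minus field_simps)
  qed
  finally show ?thesis unfolding N_def .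
qed

lemma prob_some_block_deviates_le:
  assumes "0 < n" "real (max Ks Kr) \<le> c0 * real n / 2" "deviation_level n (max Ks Kr) c0 \<le> s"
  shows "Pr {A. \<exists>l<L. \<exists>k\<in>{1..Ks}. \<exists>k'\<in>{1..Kr}.
      real (card (offdiag_block n gs gr k k')) * s < block_deviation A l k k'}
    \<le> 2 * real L * real Ks * real Kr / (real n)\<^sup>2"
proof -
  define I where "I = {..<L} \<times> {1..Ks} \<times> {1..Kr}"
  define Bad where "Bad = (\<lambda>(l, k, k'). {A. real (card (offdiag_block n gs gr k k')) * s < block_deviation A l k k'})"
  have "{A. \<exists>l<L. \<exists>k\<in>{1..Ks}. \<exists>k'\<in>{1..Kr}.
      real (card (offdiag_block n gs gr k k')) * s < block_deviation A l k k'} = (\<Union>x\<in>I. Bad x)"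
    by (auto simp: I_def Bad_def)
  also have "Pr \<dots> \<le> (\<Sum>x\<in>I. Pr (Bad x))"
    by (rule measure_pmf.finite_measure_subadditive_finite) (auto simp: I_def)
  also have "\<dots> \<le> (\<Sum>x\<in>I. 2 / (real n)\<^sup>2)"
  proof (rule sum_mono)
    fix x assume "x \<in> I"
    then obtain l k k' where "x = (l, k, k')" "l < L" "k \<in> {1..Ks}" "k' \<in> {1..Kr}"
      by (auto simp: I_def)
    then show "Pr (Bad x) \<le> 2 / (real n)\<^sup>2"
      using prob_block_deviation_le[OF _ _ _ assms] by (simp add: Bad_def)
  qed
  also have "\<dots> = 2 * real L * real Ks * real Kr / (real n)\<^sup>2"
    by (simp add: I_def card_cartesian_product)
  finally show ?thesis .
qed

lemma abs_Bhat_minus_B_le: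
  assumes "i < n" "j < n" "l < L" "0 \<le> s"
    and "block_deviation A l (gs i) (gr j) \<le> real (card (offdiag_block n gs gr (gs i) (gr j))) * s"
  shows "\<bar>Bhat n A gs gr l (gs i) (gr j) - B l (gs i) (gr j)\<bar> \<le> s + real Kr / (c0 * real n)"
proof -
  have "0 < card (community n gr (gr j))"
    using \<open>j < n\<close> by (auto simp: card_gt_0_iff)
  then have "1 / real (card (community n gr (gr j))) \<le> real Kr / (c0 * real n)"
    using receiver_community_size[OF gr_range[OF \<open>j < n\<close>]] c0_pos \<open>j < n\<close> Kr_pos
    by (simp add: field_simps)
  moreover have "\<bar>Bhat n A gs gr l (gs i) (gr j) - B l (gs i) (gr j)\<bar>
      \<le> s + 1 / real (card (community n gr (gr j)))"
    using assms B_range[OF \<open>l < L\<close> gs_range[OF \<open>i < n\<close>] gr_range[OF \<open>j < n\<close>]] \<delta>_pos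
    by (intro abs_Bhat_minus_le) auto
  ultimately show ?thesis by linarith
qed

lemma abs_Rhat_diff_le:
  assumes "2 \<le> n" "i < n" "j < n"
    and les: "labels_equiv n Ks hgs gs" and ler: "labels_equiv n Kr hgr gr"
    and good: "\<forall>l<L. \<forall>k\<in>{1..Ks}. \<forall>k'\<in>{1..Kr}.
        block_deviation A l k k' \<le> real (card (offdiag_block n gs gr k k')) * s"
    and "0 \<le> s" "s + real Kr / (c0 * real n) \<le> t" "t \<le> \<delta> / 4"
  shows "\<bar>Rhat n L A hgs hgr i j - Rmat n L (Omega B gs gr) A i j\<bar>
    \<le> 2 * (1 + 2 / \<delta>) / sqrt \<delta> * t * sqrt L / sqrt (real n - 1)"
proof -
  have "0 \<le> real Kr / (c0 * real n)" using c0_pos by simp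
  then have "0 \<le> t" using assms(7,8) by linarith
  show ?thesis
  proof (cases "i = j")
    case True
    with \<open>0 \<le> t\<close> \<delta>_pos \<open>2 \<le> n\<close> show ?thesis by (simp add: Rhat_def Rmat_def)
  next
    case False
    define p q where "p = (\<lambda>l. B l (gs i) (gr j))" and "q = (\<lambda>l. Bhat n A gs gr l (gs i) (gr j))"
    have p: "\<delta> \<le> p l \<and> p l \<le> 1 - \<delta>" if "l < L" for l
      unfolding p_def using B_range[OF that gs_range gr_range] \<open>i < n\<close> \<open>j < n\<close> by blast
    have q: "\<bar>q l - p l\<bar> \<le> t" if "l < L" for l
      unfolding p_def q_def using abs_Bhat_minus_B_le[OF \<open>i < n\<close> \<open>j < n\<close> that \<open>0 \<le> s\<close>] good that
        gs_range gr_range \<open>i < n\<close> \<open>j < n\<close> \<open>s + real Kr / (c0 * real n) \<le> t\<close>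
      by fastforce
    have "Rhat n L A hgs hgr i j = Rhat n L A gs gr i j"
      by (rule Rhat_labels_equiv[OF les ler gs_range gr_range \<open>i < n\<close> \<open>j < n\<close>])
    then show ?thesis
      using abs_standardized_sum_perturbation[OF L_pos _ \<delta>_pos \<delta>_le_half \<open>0 \<le> t\<close> \<open>t \<le> \<delta> / 4\<close> p q,
          where m = "real n - 1" and a = "\<lambda>l. A (l, i, j)"] \<open>2 \<le> n\<close> False
      by (simp add: Rhat_def Rmat_def Omega_def p_def q_def)
  qed
qed

lemma spec_norm_Rhat_diff_le:
  assumes "2 \<le> n"
    and les: "labels_equiv n Ks hgs gs" and ler: "labels_equiv n Kr hgr gr"
    and good: "\<forall>l<L. \<forall>k\<in>{1..Ks}. \<forall>k'\<in>{1..Kr}.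
        block_deviation A l k k' \<le> real (card (offdiag_block n gs gr k k')) * s"
    and "0 \<le> s" "s + real Kr / (c0 * real n) \<le> t" "t \<le> \<delta> / 4"
  shows "spec_norm n (\<lambda>i j. Rhat n L A hgs hgr i j - Rmat n L (Omega B gs gr) A i j)
    \<le> 2 * (1 + 2 / \<delta>) / sqrt \<delta> * t * sqrt (2 * real n * real L)"
proof -
  define C where "C = 2 * (1 + 2 / \<delta>) / sqrt \<delta>"
  have "0 \<le> real Kr / (c0 * real n)" using c0_pos by simp
  then have "0 \<le> C" "0 \<le> t"
    using \<delta>_pos assms(5,6) unfolding C_def by auto
  then have "0 \<le> C * t * sqrt L / sqrt (real n - 1)"
    using \<open>2 \<le> n\<close> by simp
  with abs_Rhat_diff_le[OF \<open>2 \<le> n\<close> _ _ assms(2-7)]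
  have "spec_norm n (\<lambda>i j. Rhat n L A hgs hgr i j - Rmat n L (Omega B gs gr) A i j)
      \<le> real n * (C * t * sqrt L / sqrt (real n - 1))"
    unfolding C_def by (intro spec_norm_le_entrywise)
  also have "\<dots> = C * t * sqrt L * (real n / sqrt (real n - 1))"
    by simp
  also have "\<dots> \<le> C * t * sqrt L * sqrt (2 * real n)"
    using real_div_sqrt_pred_le[OF \<open>2 \<le> n\<close>] \<open>0 \<le> C\<close> \<open>0 \<le> t\<close> by (intro mult_left_mono) auto
  also have "\<dots> = C * t * sqrt (2 * real n * real L)"
    by (simp add: real_sqrt_mult)
  finally show ?thesis unfolding C_def .
qed

lemma receiver_bias_le_deviation_level:
  assumes "3 \<le> n"
  shows "real Kr / (c0 * real n) \<le> deviation_level n (max Ks Kr) c0"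
proof -
  have "1 \<le> sqrt (2 * ln (real n))"
    using one_le_ln_of_nat[OF assms] by simp
  then have "real (max Ks Kr) \<le> real (max Ks Kr) * sqrt (2 * ln (real n))"
    using mult_left_mono[of 1 _ "real (max Ks Kr)"] by simp
  moreover have "real Kr \<le> real (max Ks Kr)" by simp
  ultimately show ?thesis
    using assms c0_pos unfolding deviation_level_def by (intro divide_right_mono) auto
qed

text \<open>The receiver bias Kr / (c0 n) is at most the deviation level s, so t = 2 s is an admissible
  tolerance in spec_norm_Rhat_diff_le.\<close>

lemma spec_norm_Rhat_diff_le_of_good:
  defines "s \<equiv> deviation_level n (max Ks Kr) c0"
  assumes "3 \<le> n"
    and small: "s * sqrt (2 * real n * real L) \<le> min (\<delta> / 8) (\<epsilon> * sqrt \<delta> / (4 * (1 + 2 / \<delta>)))"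
    and les: "labels_equiv n Ks hgs gs" and ler: "labels_equiv n Kr hgr gr"
    and good: "\<forall>l<L. \<forall>k\<in>{1..Ks}. \<forall>k'\<in>{1..Kr}.
        block_deviation A l k k' \<le> real (card (offdiag_block n gs gr k k')) * s"
  shows "spec_norm n (\<lambda>i j. Rhat n L A hgs hgr i j - Rmat n L (Omega B gs gr) A i j) \<le> \<epsilon>"
proof -
  have "real Kr / (c0 * real n) \<le> s" "0 \<le> real Kr / (c0 * real n)"
    using receiver_bias_le_deviation_level[OF \<open>3 \<le> n\<close>] c0_pos by (simp_all add: s_def)
  then have "0 \<le> s" by linarith
  have "1 \<le> 2 * real n * real L"
    using mult_mono[of 1 "2 * real n" 1 "real L"] \<open>3 \<le> n\<close> L_pos by simp
  then have "1 \<le> sqrt (2 * real n * real L)" by simp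
  note bounds = deviation_bounds_of_small[OF \<delta>_pos \<open>0 \<le> s\<close> this small]
  have "spec_norm n (\<lambda>i j. Rhat n L A hgs hgr i j - Rmat n L (Omega B gs gr) A i j)
      \<le> 2 * (1 + 2 / \<delta>) / sqrt \<delta> * (2 * s) * sqrt (2 * real n * real L)"
    using \<open>3 \<le> n\<close> \<open>0 \<le> s\<close> \<open>real Kr / (c0 * real n) \<le> s\<close> bounds(1)
    by (intro spec_norm_Rhat_diff_le[OF _ les ler good]) auto
  with bounds(2) show ?thesis by simp
qed

lemma prob_spec_norm_Rhat_diff_gt_le:
  fixes est :: "adj \<Rightarrow> (nat \<Rightarrow> nat) \<times> (nat \<Rightarrow> nat)" and \<epsilon> :: real
  defines "s \<equiv> deviation_level n (max Ks Kr) c0"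
  assumes "3 \<le> n" "real (max Ks Kr) \<le> c0 * real n / 2"
    and small: "s * sqrt (2 * real n * real L) \<le> min (\<delta> / 8) (\<epsilon> * sqrt \<delta> / (4 * (1 + 2 / \<delta>)))"
  shows "Pr {A. \<epsilon> < spec_norm n (\<lambda>i j.
        Rhat n L A (fst (est A)) (snd (est A)) i j - Rmat n L (Omega B gs gr) A i j)}
    \<le> Pr {A. \<not> labels_equiv n Ks (fst (est A)) gs} + Pr {A. \<not> labels_equiv n Kr (snd (est A)) gr}
      + 2 * real L * real Ks * real Kr / (real n)\<^sup>2"
proof -
  define NS NR NG where "NS = {A. \<not> labels_equiv n Ks (fst (est A)) gs}"
    and "NR = {A. \<not> labels_equiv n Kr (snd (est A)) gr}"
    and "NG = {A. \<exists>l<L. \<exists>k\<in>{1..Ks}. \<exists>k'\<in>{1..Kr}.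
      real (card (offdiag_block n gs gr k k')) * s < block_deviation A l k k'}"
  have "{A. \<epsilon> < spec_norm n (\<lambda>i j.
        Rhat n L A (fst (est A)) (snd (est A)) i j - Rmat n L (Omega B gs gr) A i j)}
      \<subseteq> NS \<union> NR \<union> NG"
  proof (rule subsetI, rule ccontr)
    fix A assume A: "A \<in> {A. \<epsilon> < spec_norm n (\<lambda>i j.
        Rhat n L A (fst (est A)) (snd (est A)) i j - Rmat n L (Omega B gs gr) A i j)}"
      and "A \<notin> NS \<union> NR \<union> NG"
    then have les: "labels_equiv n Ks (fst (est A)) gs" and ler: "labels_equiv n Kr (snd (est A)) gr"
      and "A \<notin> NG" by (auto simp: NS_def NR_def)
    from \<open>A \<notin> NG\<close> have good: "\<forall>l<L. \<forall>k\<in>{1..Ks}. \<forall>k'\<in>{1..Kr}.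
        block_deviation A l k k' \<le> real (card (offdiag_block n gs gr k k')) * s"
      unfolding NG_def not_less [symmetric] by blast
    from A spec_norm_Rhat_diff_le_of_good[OF \<open>3 \<le> n\<close> small[unfolded s_def] les ler good[unfolded s_def]]
    show False by simp
  qed
  then have "Pr {A. \<epsilon> < spec_norm n (\<lambda>i j.
        Rhat n L A (fst (est A)) (snd (est A)) i j - Rmat n L (Omega B gs gr) A i j)}
      \<le> Pr (NS \<union> NR \<union> NG)"
    by (rule measure_pmf.finite_measure_mono) simp
  also have "\<dots> \<le> Pr NS + Pr NR + Pr NG"
    using measure_Un_le[of NS "measure_pmf (adj_pmf n L (Omega B gs gr))" NR]
      measure_Un_le[of "NS \<union> NR" "measure_pmf (adj_pmf n L (Omega B gs gr))" NG]
    by simp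
  also have "Pr NG \<le> 2 * real L * real Ks * real Kr / (real n)\<^sup>2"
    unfolding NG_def using \<open>3 \<le> n\<close> \<open>real (max Ks Kr) \<le> c0 * real n / 2\<close>
    by (intro prob_some_block_deviates_le) (auto simp: s_def)
  finally show ?thesis unfolding NS_def NR_def by simp
qed

end

section \<open>Asymptotics\<close>

lemma eventually_deviation_level_small:
  fixes L Ks Kr :: "nat \<Rightarrow> nat" and c0 r :: real
  assumes "0 < c0" "0 < r" "\<And>n. 1 \<le> L n"
    and lim: "(\<lambda>n. real (max (Ks n) (Kr n))^2 * real (L n) * ln (real n) / real n) \<longlonglongrightarrow> 0"
  shows "\<forall>\<^sub>F n in sequentially. 3 \<le> n \<and> real (max (Ks n) (Kr n)) \<le> c0 * real n / 2
      \<and> deviation_level n (max (Ks n) (Kr n)) c0 * sqrt (2 * real n * real (L n)) \<le> r"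
proof -
  have "0 < min (c0\<^sup>2 / 4) (c0\<^sup>2 * r\<^sup>2 / 4)" using assms by simp
  from order_tendstoD(2)[OF lim this] eventually_ge_at_top[of 3]
  show ?thesis
  proof eventually_elim
    case (elim n)
    define K s where "K = real (max (Ks n) (Kr n))" and "s = deviation_level n (max (Ks n) (Kr n)) c0"
    have "3 \<le> n" "1 \<le> ln (real n)" "1 \<le> real (L n)"
      using elim one_le_ln_of_nat assms(3) by auto
    have a: "K\<^sup>2 * real (L n) * ln (real n) < c0\<^sup>2 / 4 * real n"
      "K\<^sup>2 * real (L n) * ln (real n) < c0\<^sup>2 * r\<^sup>2 / 4 * real n"
      using elim \<open>3 \<le> n\<close> by (simp_all add: K_def pos_divide_less_eq)
    have "1 \<le> real (L n) * ln (real n)"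
      using mult_mono[OF \<open>1 \<le> real (L n)\<close> \<open>1 \<le> ln (real n)\<close>] by simp
    then have "K\<^sup>2 * 1 \<le> K\<^sup>2 * (real (L n) * ln (real n))"
      by (intro mult_left_mono) simp_all
    then have "K\<^sup>2 \<le> K\<^sup>2 * real (L n) * ln (real n)"
      by (simp add: mult.assoc)
    also have "\<dots> \<le> c0\<^sup>2 / 4 * (real n)\<^sup>2"
      using a(1) \<open>3 \<le> n\<close> mult_left_mono[of "real n" "(real n)\<^sup>2" "c0\<^sup>2 / 4"]
      by (simp add: power2_eq_square)
    also have "\<dots> = (c0 * real n / 2)\<^sup>2" by (simp add: power2_eq_square)
    finally have "K \<le> c0 * real n / 2"
      by (rule power2_le_imp_le) (use \<open>0 < c0\<close> in simp)
    have "(s * sqrt (2 * real n * real (L n)))\<^sup>2 = 4 / c0\<^sup>2 * (K\<^sup>2 * real (L n) * ln (real n)) / real n"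
      using \<open>1 \<le> ln (real n)\<close> \<open>3 \<le> n\<close> \<open>0 < c0\<close>
      by (simp add: s_def K_def deviation_level_def power_mult_distrib power_divide field_simps
          power2_eq_square)
    also have "\<dots> < r\<^sup>2"
      using a(2) \<open>3 \<le> n\<close> \<open>0 < c0\<close> by (simp add: field_simps)
    finally have "s * sqrt (2 * real n * real (L n)) \<le> r"
      using \<open>0 < r\<close> by (simp add: power2_less_imp_less less_imp_le)
    with \<open>3 \<le> n\<close> \<open>K \<le> c0 * real n / 2\<close> show ?case by (simp add: K_def s_def)
  qed
qed

lemma union_bound_tendsto_0:
  fixes L Ks Kr :: "nat \<Rightarrow> nat"
  assumes lim: "(\<lambda>n. real (max (Ks n) (Kr n))^2 * real (L n) * ln (real n) / real n) \<longlonglongrightarrow> 0"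
  shows "(\<lambda>n. 2 * real (L n) * real (Ks n) * real (Kr n) / (real n)\<^sup>2) \<longlonglongrightarrow> 0"
proof (rule tendsto_sandwich)
  show "\<forall>\<^sub>F n in sequentially. 0 \<le> 2 * real (L n) * real (Ks n) * real (Kr n) / (real n)\<^sup>2"
    by simp
  show "\<forall>\<^sub>F n in sequentially. 2 * real (L n) * real (Ks n) * real (Kr n) / (real n)\<^sup>2
      \<le> 2 * (real (max (Ks n) (Kr n))^2 * real (L n) * ln (real n) / real n)"
    using eventually_ge_at_top[of 3]
  proof eventually_elim
    case (elim n)
    then have "1 \<le> ln (real n)" by (rule one_le_ln_of_nat)
    let ?K = "real (max (Ks n) (Kr n))"
    have "real (Ks n) * real (Kr n) \<le> ?K\<^sup>2 * 1"
      by (simp add: power2_eq_square mult_mono)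
    also have "\<dots> \<le> ?K\<^sup>2 * ln (real n)"
      using \<open>1 \<le> ln (real n)\<close> by (intro mult_left_mono) simp_all
    finally have "real (L n) * (real (Ks n) * real (Kr n)) \<le> real (L n) * (?K\<^sup>2 * ln (real n))"
      by (intro mult_left_mono) simp_all
    then have "real (L n) * real (Ks n) * real (Kr n) \<le> ?K\<^sup>2 * real (L n) * ln (real n)"
      by (simp add: mult_ac)
    moreover have "real n \<le> (real n)\<^sup>2" using elim by (simp add: power2_eq_square)
    ultimately have "real (L n) * real (Ks n) * real (Kr n) / (real n)\<^sup>2
        \<le> ?K\<^sup>2 * real (L n) * ln (real n) / real n"
      using elim by (intro frac_le) (auto intro: order_trans[rotated])
    then show ?case by simp
  qed
  show "(\<lambda>n. 2 * (real (max (Ks n) (Kr n))^2 * real (L n) * ln (real n) / real n)) \<longlonglongrightarrow> 0"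
    using tendsto_mult_right_zero[OF lim] by simp
qed simp

lemma prob_compl_tendsto_0:
  assumes "(\<lambda>n. measure_pmf.prob (p n) {x. Q n x}) \<longlonglongrightarrow> 1"
  shows "(\<lambda>n. measure_pmf.prob (p n) {x. \<not> Q n x}) \<longlonglongrightarrow> 0"
proof -
  have "measure_pmf.prob (p n) {x. \<not> Q n x} = 1 - measure_pmf.prob (p n) {x. Q n x}" for n
    using measure_pmf.prob_compl[of "{x. Q n x}" "p n"]
    by (simp add: Compl_eq_Diff_UNIV [symmetric] Collect_neg_eq)
  then show ?thesis using tendsto_diff[OF tendsto_const[of 1] assms] by simp
qed

lemma prob_spec_norm_Rhat_diff_gt_tendsto_0:
  fixes L Ks Kr :: "nat \<Rightarrow> nat" and gs gr :: "nat \<Rightarrow> nat \<Rightarrow> nat"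
    and B :: "nat \<Rightarrow> nat \<Rightarrow> nat \<Rightarrow> nat \<Rightarrow> real"
    and est :: "nat \<Rightarrow> adj \<Rightarrow> (nat \<Rightarrow> nat) \<times> (nat \<Rightarrow> nat)" and \<delta> c0 \<epsilon> :: real
  assumes model: "\<And>n. ml_scbm n (L n) (Ks n) (Kr n) (gs n) (gr n) (B n) \<delta> c0"
    and lim: "(\<lambda>n. real (max (Ks n) (Kr n))^2 * real (L n) * ln (real n) / real n) \<longlonglongrightarrow> 0"
    and sender_recovery: "(\<lambda>n. measure_pmf.prob (adj_pmf n (L n) (Omega (B n) (gs n) (gr n)))
      {A. labels_equiv n (Ks n) (fst (est n A)) (gs n)}) \<longlonglongrightarrow> 1"
    and receiver_recovery: "(\<lambda>n. measure_pmf.prob (adj_pmf n (L n) (Omega (B n) (gs n) (gr n)))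
      {A. labels_equiv n (Kr n) (snd (est n A)) (gr n)}) \<longlonglongrightarrow> 1"
    and "0 < \<epsilon>"
  shows "(\<lambda>n. measure_pmf.prob (adj_pmf n (L n) (Omega (B n) (gs n) (gr n)))
      {A. \<epsilon> < spec_norm n (\<lambda>i j. Rhat n (L n) A (fst (est n A)) (snd (est n A)) i j
        - Rmat n (L n) (Omega (B n) (gs n) (gr n)) A i j)}) \<longlonglongrightarrow> 0"
proof (rule tendsto_sandwich[OF _ _ tendsto_const])
  define r where "r = min (\<delta> / 8) (\<epsilon> * sqrt \<delta> / (4 * (1 + 2 / \<delta>)))"
  have "0 < \<delta>" "0 < c0" "\<And>n. 1 \<le> L n"
    using ml_scbm.\<delta>_pos[OF model] ml_scbm.c0_pos[OF model] ml_scbm.L_pos[OF model] by blast+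
  then have "0 < r" using \<open>0 < \<epsilon>\<close> by (simp add: r_def add_pos_pos)
  from eventually_deviation_level_small[OF \<open>0 < c0\<close> this \<open>\<And>n. 1 \<le> L n\<close> lim]
  show "\<forall>\<^sub>F n in sequentially.
      measure_pmf.prob (adj_pmf n (L n) (Omega (B n) (gs n) (gr n)))
        {A. \<epsilon> < spec_norm n (\<lambda>i j. Rhat n (L n) A (fst (est n A)) (snd (est n A)) i j
          - Rmat n (L n) (Omega (B n) (gs n) (gr n)) A i j)}
      \<le> measure_pmf.prob (adj_pmf n (L n) (Omega (B n) (gs n) (gr n)))
          {A. \<not> labels_equiv n (Ks n) (fst (est n A)) (gs n)}
        + measure_pmf.prob (adj_pmf n (L n) (Omega (B n) (gs n) (gr n)))
          {A. \<not> labels_equiv n (Kr n) (snd (est n A)) (gr n)}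
        + 2 * real (L n) * real (Ks n) * real (Kr n) / (real n)\<^sup>2"
    by eventually_elim (intro ml_scbm.prob_spec_norm_Rhat_diff_gt_le[OF model], auto simp: r_def)
  show "(\<lambda>n. measure_pmf.prob (adj_pmf n (L n) (Omega (B n) (gs n) (gr n)))
          {A. \<not> labels_equiv n (Ks n) (fst (est n A)) (gs n)}
        + measure_pmf.prob (adj_pmf n (L n) (Omega (B n) (gs n) (gr n)))
          {A. \<not> labels_equiv n (Kr n) (snd (est n A)) (gr n)}
        + 2 * real (L n) * real (Ks n) * real (Kr n) / (real n)\<^sup>2) \<longlonglongrightarrow> 0"
    using tendsto_add[OF tendsto_add[OF prob_compl_tendsto_0[OF sender_recovery]
        prob_compl_tendsto_0[OF receiver_recovery]] union_bound_tendsto_0[OF lim]]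
    by simp
qed simp

theorem lemma5:
  fixes L Ks Kr Ks0 Kr0 :: "nat \<Rightarrow> nat"
    and gs gr :: "nat \<Rightarrow> nat \<Rightarrow> nat"
    and B :: "nat \<Rightarrow> nat \<Rightarrow> nat \<Rightarrow> nat \<Rightarrow> real"
    and M :: "nat \<Rightarrow> nat \<Rightarrow> nat \<Rightarrow> nat \<Rightarrow> adj \<Rightarrow> (nat \<Rightarrow> nat) \<times> (nat \<Rightarrow> nat)"
    and \<delta> c0 :: real
  assumes L_pos: "\<And>n. L n \<ge> 1"
    and K_pos: "\<And>n. Ks n \<ge> 1" "\<And>n. Kr n \<ge> 1"
    and gs_range: "\<And>n i. i < n \<Longrightarrow> gs n i \<in> {1..Ks n}"
    and gr_range: "\<And>n i. i < n \<Longrightarrow> gr n i \<in> {1..Kr n}"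
    and H0: "\<And>n. Ks n = Ks0 n" "\<And>n. Kr n = Kr0 n"
    and A1: "0 < \<delta>" "\<delta> < 1/2"
      "\<And>n l k k'. l < L n \<Longrightarrow> k \<in> {1..Ks n} \<Longrightarrow> k' \<in> {1..Kr n} \<Longrightarrow>
          \<delta> \<le> B n l k k' \<and> B n l k k' \<le> 1 - \<delta>"
    and A2: "c0 > 0"
      "\<And>n k. k \<in> {1..Ks n} \<Longrightarrow> real (card {i. i < n \<and> gs n i = k}) \<ge> c0 * real n / real (Ks n)"
      "\<And>n k. k \<in> {1..Kr n} \<Longrightarrow> real (card {i. i < n \<and> gr n i = k}) \<ge> c0 * real n / real (Kr n)"
    and A3: "(\<lambda>n. real (max (Ks n) (Kr n))^2 * real (L n) * ln (real n) / real n) \<longlonglongrightarrow> 0"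
    and A4s: "(\<lambda>n. measure_pmf.prob (adj_pmf n (L n) (Omega (B n) (gs n) (gr n)))
                {A. labels_equiv n (Ks n) (fst (M n (L n) (Ks n) (Kr n) A)) (gs n)}) \<longlonglongrightarrow> 1"
    and A4r: "(\<lambda>n. measure_pmf.prob (adj_pmf n (L n) (Omega (B n) (gs n) (gr n)))
                {A. labels_equiv n (Kr n) (snd (M n (L n) (Ks n) (Kr n) A)) (gr n)}) \<longlonglongrightarrow> 1"
  shows "\<And>\<epsilon>. \<epsilon> > 0 \<Longrightarrow>
    (\<lambda>n. measure_pmf.prob (adj_pmf n (L n) (Omega (B n) (gs n) (gr n)))
       {A. spec_norm n (\<lambda>i j.
             Rhat n (L n) A (fst (M n (L n) (Ks0 n) (Kr0 n) A)) (snd (M n (L n) (Ks0 n) (Kr0 n) A)) i j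
             - Rmat n (L n) (Omega (B n) (gs n) (gr n)) A i j) > \<epsilon>}) \<longlonglongrightarrow> 0"
proof -
  have model: "ml_scbm n (L n) (Ks n) (Kr n) (gs n) (gr n) (B n) \<delta> c0" for n
    by unfold_locales (use L_pos K_pos gs_range gr_range A1 A2 in auto)
  fix \<epsilon> :: real assume "\<epsilon> > 0"
  from prob_spec_norm_Rhat_diff_gt_tendsto_0[OF model A3 A4s A4r this] show "?thesis \<epsilon>"
    by (simp only: H0)
qed

end
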